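(* Let $f:\mathbb{X}\to\mathbb{R}$ be a (finite, real-valued) measurable function. If $$\mu\Big(\bigcup_{N>0}\bigcap_{n>N}\{B_nf\le 0\}\Big)>0,$$ i.e. the set of points $x$ such that $B_nf(x)\le 0$ for all sufficiently large $n$ has positive measure, then $\sup_{n>0}\sum_{i=0}^{n-1}f\circ T^i<\infty$ $\mu$-a.e. on $\mathbb{X}$.
   Context: Standing assumptions: $(\mathbb{X},\mathcal{X},\mu,T)$ is a probability space ($\mu(\mathbb{X})=1$) with $T$ an invertible, bi-measurable, measure-preserving, ergodic transformation. For a measurable $f:\mathbb{X}\to\mathbb{R}$ and $n\ge 0$, the symmetric bilateral averages are $B_nf=\frac{1}{2n+1}\sum_{i=-n}^{n}f\circ T^i$. *)

theory Defs
  imports "HOL-Probability.Probability"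
begin

definition inv_map :: "'a measure \<Rightarrow> ('a \<Rightarrow> 'a) \<Rightarrow> 'a \<Rightarrow> 'a" where
  "inv_map M T = the_inv_into (space M) T"

definition ergodic_ipt :: "'a measure \<Rightarrow> ('a \<Rightarrow> 'a) \<Rightarrow> bool" where
  "ergodic_ipt M T \<longleftrightarrow>
     prob_space M \<and>
     bij_betw T (space M) (space M) \<and>
     T \<in> M \<rightarrow>\<^sub>M M \<and>
     inv_map M T \<in> M \<rightarrow>\<^sub>M M \<and>
     distr M M T = M \<and>
     (\<forall>A \<in> sets M. T -` A \<inter> space M = A \<longrightarrow> measure M A = 0 \<or> measure M A = 1)"

definition ipow :: "'a measure \<Rightarrow> ('a \<Rightarrow> 'a) \<Rightarrow> int \<Rightarrow> 'a \<Rightarrow> 'a" where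
  "ipow M T i = (if 0 \<le> i then T ^^ nat i else inv_map M T ^^ nat (- i))"

definition bilat_avg :: "'a measure \<Rightarrow> ('a \<Rightarrow> 'a) \<Rightarrow> ('a \<Rightarrow> real) \<Rightarrow> nat \<Rightarrow> 'a \<Rightarrow> real" where
  "bilat_avg M T f n x =
     (\<Sum>i\<in>{- int n..int n}. f (ipow M T i x)) / (2 * real n + 1)"

end

theory Submission
  imports Defs
begin

text \<open>Let \<open>S\<^sub>n\<close> be the Birkhoff sums of \<open>f\<close>. By ergodicity the set where \<open>S\<^sub>n\<close> is unbounded
  above has measure 0 or 1; suppose it is 1. Choose \<open>N\<close> such that the set \<open>F\<close> of points with
  \<open>B\<^sub>nf \<le> 0\<close> for all \<open>n > N\<close> has positive measure. The maximal ergodic inequality shows that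
  a.e. orbit visits \<open>F\<close> with frequency close to \<open>\<mu>(F)\<close>. Take such an orbit with unbounded
  sums and a record time \<open>u\<close>, i.e. \<open>S\<^sub>t < S\<^sub>u\<close> for all \<open>t < u\<close>. For \<open>u\<close> large the orbit
  visits \<open>F\<close> at some time \<open>k\<close> with \<open>u/2 \<le> k < u - N\<close>; the window of radius \<open>n = u - k - 1\<close>
  around \<open>k\<close> ends at \<open>u - 1\<close>, so its sum \<open>S\<^sub>u - S\<^sub>k\<^sub>-\<^sub>n\<close> is positive, contradicting
  \<open>B\<^sub>nf \<le> 0\<close> at \<open>T\<^sup>kx \<in> F\<close>.\<close>

definition birkhoff_sum :: "('a \<Rightarrow> 'a) \<Rightarrow> ('a \<Rightarrow> real) \<Rightarrow> nat \<Rightarrow> 'a \<Rightarrow> real" where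
  "birkhoff_sum T h n x = (\<Sum>i<n. h ((T ^^ i) x))"

lemma birkhoff_sum_0 [simp]: "birkhoff_sum T h 0 x = 0"
  by (simp add: birkhoff_sum_def)

lemma birkhoff_sum_Suc: "birkhoff_sum T h (Suc n) x = h x + birkhoff_sum T h n (T x)"
  unfolding birkhoff_sum_def sum.lessThan_Suc_shift by (simp add: funpow_Suc_right del: funpow.simps)

lemma bdd_above_birkhoff_sum_shift:
  "bdd_above (range (\<lambda>n. birkhoff_sum T h n (T x))) \<longleftrightarrow> bdd_above (range (\<lambda>n. birkhoff_sum T h n x))"
proof
  assume "bdd_above (range (\<lambda>n. birkhoff_sum T h n (T x)))"
  then obtain B where B: "\<And>n. birkhoff_sum T h n (T x) \<le> B" by (auto simp: bdd_above_def)
  have "birkhoff_sum T h n x \<le> max 0 (h x + B)" for n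
    using B by (cases n) (auto simp: birkhoff_sum_Suc le_max_iff_disj)
  then show "bdd_above (range (\<lambda>n. birkhoff_sum T h n x))" by (rule bdd_aboveI2)
next
  assume "bdd_above (range (\<lambda>n. birkhoff_sum T h n x))"
  then obtain B where B: "\<And>n. birkhoff_sum T h n x \<le> B" by (auto simp: bdd_above_def)
  have "birkhoff_sum T h n (T x) \<le> B - h x" for n
    using B[of "Suc n"] by (simp add: birkhoff_sum_Suc)
  then show "bdd_above (range (\<lambda>n. birkhoff_sum T h n (T x)))" by (rule bdd_aboveI2)
qed

lemma bdd_above_range_iff_nat_bound:
  fixes s :: "'b \<Rightarrow> real"
  shows "bdd_above (range s) \<longleftrightarrow> (\<exists>B::nat. \<forall>n. s n \<le> real B)"
proof
  assume "bdd_above (range s)"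
  then obtain B where "\<And>n. s n \<le> B" by (auto simp: bdd_above_def)
  moreover obtain m :: nat where "B \<le> real m" using real_arch_simple by blast
  ultimately show "\<exists>B::nat. \<forall>n. s n \<le> real B" by (meson order_trans)
qed (auto intro: bdd_aboveI2)

definition birkhoff_max :: "('a \<Rightarrow> 'a) \<Rightarrow> ('a \<Rightarrow> real) \<Rightarrow> nat \<Rightarrow> 'a \<Rightarrow> real" where
  "birkhoff_max T h n x = Max ((\<lambda>k. birkhoff_sum T h k x) ` {..n})"

lemma birkhoff_sum_le_max: "k \<le> n \<Longrightarrow> birkhoff_sum T h k x \<le> birkhoff_max T h n x"
  unfolding birkhoff_max_def by (intro Max_ge) auto

lemma birkhoff_max_nonneg: "0 \<le> birkhoff_max T h n x"
  using birkhoff_sum_le_max[of 0 n T h x] by simp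

lemma birkhoff_max_attained: "\<exists>k\<le>n. birkhoff_max T h n x = birkhoff_sum T h k x"
proof -
  have "birkhoff_max T h n x \<in> (\<lambda>k. birkhoff_sum T h k x) ` {..n}"
    unfolding birkhoff_max_def by (intro Max_in) auto
  then show ?thesis by auto
qed

lemma birkhoff_max_mono: "m \<le> n \<Longrightarrow> birkhoff_max T h m x \<le> birkhoff_max T h n x"
  by (metis birkhoff_max_attained birkhoff_sum_le_max order_trans)

lemma birkhoff_max_le_step: "birkhoff_max T h n x \<le> max 0 (h x + birkhoff_max T h n (T x))"
  unfolding birkhoff_max_def[of T h n x]
proof (intro Max.boundedI)
  fix y assume "y \<in> (\<lambda>k. birkhoff_sum T h k x) ` {..n}"
  then obtain k where k: "k \<le> n" "y = birkhoff_sum T h k x" by auto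
  show "y \<le> max 0 (h x + birkhoff_max T h n (T x))"
  proof (cases k)
    case (Suc j)
    then have "birkhoff_sum T h j (T x) \<le> birkhoff_max T h n (T x)"
      using k by (intro birkhoff_sum_le_max) simp
    then show ?thesis using k Suc by (simp add: birkhoff_sum_Suc)
  qed (use k in simp)
qed auto

lemma abs_birkhoff_sum_le:
  assumes "\<And>y. \<bar>h y\<bar> \<le> b"
  shows "\<bar>birkhoff_sum T h n x\<bar> \<le> real n * b"
proof -
  have "\<bar>birkhoff_sum T h n x\<bar> \<le> (\<Sum>i<n. \<bar>h ((T ^^ i) x)\<bar>)"
    unfolding birkhoff_sum_def by (rule sum_abs)
  also have "\<dots> \<le> (\<Sum>i<n. b)" by (intro sum_mono assms)
  finally show ?thesis by simp
qed

lemma abs_birkhoff_max_le: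
  assumes "\<And>y. \<bar>h y\<bar> \<le> b"
  shows "\<bar>birkhoff_max T h n x\<bar> \<le> real n * b"
proof -
  obtain k where k: "k \<le> n" "birkhoff_max T h n x = birkhoff_sum T h k x"
    using birkhoff_max_attained[of n T h x] by blast
  have b: "0 \<le> b" using abs_ge_zero[of "h x"] assms[of x] by linarith
  have "\<bar>birkhoff_sum T h k x\<bar> \<le> real k * b" by (rule abs_birkhoff_sum_le[OF assms])
  also have "\<dots> \<le> real n * b" using k(1) b by (intro mult_right_mono) auto
  finally show ?thesis by (simp only: k(2))
qed

lemma record_time_exists:
  fixes s :: "nat \<Rightarrow> real"
  assumes "\<not> bdd_above (range s)"
  shows "\<exists>u>u0. \<forall>t<u. s t < s u"
proof -
  define B where "B = Max (s ` {..u0})"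
  have B: "t \<le> u0 \<Longrightarrow> s t \<le> B" for t unfolding B_def by (intro Max_ge) auto
  have "\<exists>n. B < s n" using assms by (auto simp: bdd_above_def not_le)
  define u where "u = (LEAST n. B < s n)"
  have u: "B < s u" unfolding u_def by (rule LeastI_ex) fact
  have "\<not> B < s t" if "t < u" for t
    using not_less_Least[of t "\<lambda>n. B < s n"] that unfolding u_def by blast
  then have "\<forall>t<u. s t < s u" using u by fastforce
  moreover have "u0 < u" using B[of u] u by (cases "u \<le> u0") auto
  ultimately show ?thesis by blast
qed

lemma sum_symmetric_window:
  assumes "m \<le> k"
  shows "(\<Sum>i\<in>{- int m..int m}. g (nat (int k + i))) = (\<Sum>j\<in>{k - m..k + m}. g j)"
  by (rule sum.reindex_bij_witness[of _ "\<lambda>j. int j - int k" "\<lambda>i. nat (int k + i)"])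
     (use assms in auto)

lemma bdd_above_sums_if_windows_nonpos:
  fixes g :: "nat \<Rightarrow> real" and V :: "nat set"
  assumes window: "\<And>k n. k \<in> V \<Longrightarrow> N < n \<Longrightarrow> n \<le> k \<Longrightarrow> (\<Sum>j\<in>{k - n..k + n}. g j) \<le> 0"
    and upper: "\<And>n. (\<Sum>k<n. indicator V k) \<le> \<beta> * real n + B"
    and lower: "\<And>n. \<alpha> * real n - B \<le> (\<Sum>k<n. indicator V k)"
    and dens: "0 \<le> \<beta>" "\<beta> < 2 * \<alpha>"
  shows "bdd_above (range (\<lambda>n. \<Sum>j<n. g j))"
proof (rule ccontr)
  define s where "s = (\<lambda>n. \<Sum>j<n. g j)"
  define C where "C n = (\<Sum>k<n. indicator V k :: real)" for n
  define \<delta> where "\<delta> = \<alpha> - \<beta> / 2"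
  have \<delta>: "0 < \<delta>" unfolding \<delta>_def using dens by simp
  assume "\<not> bdd_above (range (\<lambda>n. \<Sum>j<n. g j))"
  then have "\<not> bdd_above (range s)" by (simp add: s_def)
  from record_time_exists[OF this]
  obtain u where u: "nat \<lceil>(\<alpha> * (N + 1) + 2 * B) / \<delta>\<rceil> + 2 * N + 2 < u"
    and record_at_u: "\<forall>t<u. s t < s u"
    by blast
  define a where "a = u div 2"
  define b where "b = u - N - 1"
  have "(\<alpha> * (N + 1) + 2 * B) / \<delta> < u" using u by linarith
  then have large: "\<alpha> * (N + 1) + 2 * B < \<delta> * u" using \<delta> by (simp add: field_simps)
  have "C a \<le> \<beta> * u / 2 + B"
    using upper[of a] dens(1) mult_left_mono[of "2 * real a" u \<beta>] unfolding C_def a_def by linarith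
  moreover have "real b = real u - real N - 1" unfolding b_def using u by auto
  then have "\<alpha> * real u - \<alpha> * real N - \<alpha> - B \<le> C b"
    using lower[of b] unfolding C_def by (simp add: right_diff_distrib)
  moreover have "\<alpha> * real N + \<alpha> + 2 * B < \<alpha> * real u - \<beta> * real u / 2"
    using large unfolding \<delta>_def by (simp add: algebra_simps)
  ultimately have "0 < C b - C a" by linarith
  moreover have "a \<le> b" unfolding a_def b_def using u by simp
  then have "C b - C a = (\<Sum>k\<in>{a..<b}. indicator V k)"
    unfolding C_def by (simp add: lessThan_atLeast0 sum_diff_nat_ivl)
  ultimately obtain k where k: "a \<le> k" "k < b" "k \<in> V"
    by (metis (no_types, lifting) atLeastLessThan_iff indicator_simps(2) less_irrefl sum.neutral)
  define n where "n = u - k - 1"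
  have "N < n" "n \<le> k" "k + n = u - 1" unfolding n_def using k u unfolding a_def b_def by auto
  then have "(\<Sum>j\<in>{k - n..k + n}. g j) = s u - s (k - n)"
    unfolding s_def using sum_diff_nat_ivl[of 0 "k - n" u g]
    by (simp add: lessThan_atLeast0 atLeastLessThanSuc_atLeastAtMost[symmetric])
  moreover have "s (k - n) < s u" using \<open>k + n = u - 1\<close> \<open>n \<le> k\<close> u record_at_u by simp
  ultimately show False using window[OF \<open>k \<in> V\<close> \<open>N < n\<close> \<open>n \<le> k\<close>] by simp
qed

lemma measurable_funpow: "T \<in> M \<rightarrow>\<^sub>M M \<Longrightarrow> (T ^^ n) \<in> M \<rightarrow>\<^sub>M M"
  by (induction n) (simp_all add: measurable_ident_sets id_def measurable_comp)

locale prob_mpt = prob_space M for M :: "'a measure" +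
  fixes T :: "'a \<Rightarrow> 'a"
  assumes T_measurable [measurable]: "T \<in> M \<rightarrow>\<^sub>M M"
    and distr_T: "distr M M T = M"
begin

lemma funpow_measurable [measurable]: "(T ^^ n) \<in> M \<rightarrow>\<^sub>M M"
  by (rule measurable_funpow[OF T_measurable])

lemma T_space: "x \<in> space M \<Longrightarrow> T x \<in> space M"
  by (rule measurable_space[OF T_measurable])

lemma birkhoff_sum_measurable [measurable]:
  assumes [measurable]: "h \<in> borel_measurable M"
  shows "birkhoff_sum T h n \<in> borel_measurable M"
  unfolding birkhoff_sum_def[abs_def] by measurable

lemma birkhoff_max_measurable [measurable]:
  "h \<in> borel_measurable M \<Longrightarrow> birkhoff_max T h n \<in> borel_measurable M"
  unfolding birkhoff_max_def[abs_def] by (intro borel_measurable_Max) auto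

lemma sets_bdd_above_birkhoff_sum [measurable]:
  "h \<in> borel_measurable M \<Longrightarrow> {x \<in> space M. bdd_above (range (\<lambda>n. birkhoff_sum T h n x))} \<in> sets M"
  unfolding bdd_above_range_iff_nat_bound by measurable

lemma integral_comp_T:
  fixes g :: "'a \<Rightarrow> real"
  assumes "g \<in> borel_measurable M"
  shows "(\<integral>x. g (T x) \<partial>M) = (\<integral>x. g x \<partial>M)"
  using integral_distr[OF T_measurable assms] distr_T by simp

lemma maximal_ergodic_inequality:
  assumes h [measurable]: "h \<in> borel_measurable M" and b: "\<And>x. \<bar>h x\<bar> \<le> b"
  shows "0 \<le> (\<integral>x. h x * indicator {x \<in> space M. 0 < birkhoff_max T h n x} x \<partial>M)"
proof -
  let ?m = "birkhoff_max T h n" and ?P = "{x \<in> space M. 0 < birkhoff_max T h n x}"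
  have int_m: "integrable M ?m"
    by (rule integrable_const_bound[where B="real n * b"]) (auto intro: abs_birkhoff_max_le[OF b])
  have int_mT: "integrable M (\<lambda>x. ?m (T x))"
    by (rule integrable_const_bound[where B="real n * b"]) (auto intro: abs_birkhoff_max_le[OF b])
  have "0 \<le> b" using abs_ge_zero[of "h undefined"] b[of undefined] by linarith
  then have int_hP: "integrable M (\<lambda>x. h x * indicator ?P x)"
    by (intro integrable_const_bound[where B=b]) (auto simp: indicator_def b)
  have "?m x - ?m (T x) \<le> h x * indicator ?P x" if "x \<in> space M" for x
  proof (cases "x \<in> ?P")
    case True
    then show ?thesis using birkhoff_max_le_step[of T h n x] by (simp add: max_def split: if_splits)
  next
    case False
    then have "?m x = 0" using that birkhoff_max_nonneg[of T h n x] by simp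
    then show ?thesis using birkhoff_max_nonneg[of T h n "T x"] False by simp
  qed
  then have "(\<integral>x. ?m x - ?m (T x) \<partial>M) \<le> (\<integral>x. h x * indicator ?P x \<partial>M)"
    by (intro integral_mono Bochner_Integration.integrable_diff int_m int_mT int_hP)
  moreover have "(\<integral>x. ?m x - ?m (T x) \<partial>M) = 0"
    using Bochner_Integration.integral_diff[OF int_m int_mT] integral_comp_T[of ?m] by simp
  ultimately show ?thesis by simp
qed

lemma expectation_ge_of_birkhoff_max:
  assumes h [measurable]: "h \<in> borel_measurable M" and b: "\<And>x. \<bar>h x\<bar> \<le> b"
  shows "- b * (1 - prob {x \<in> space M. 0 < birkhoff_max T h n x}) \<le> expectation h"
proof -
  let ?P = "{x \<in> space M. 0 < birkhoff_max T h n x}"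
  have "0 \<le> b" using abs_ge_zero[of "h undefined"] b[of undefined] by linarith
  then have int_hP: "integrable M (\<lambda>x. h x * indicator ?P x)"
    by (intro integrable_const_bound[where B=b]) (auto simp: indicator_def b)
  have int_Q: "integrable M (\<lambda>x. b * indicator (space M - ?P) x)"
    by (rule integrable_const_bound[where B="\<bar>b\<bar>"]) (auto simp: indicator_def)
  have int_h: "integrable M h"
    by (rule integrable_const_bound[where B=b]) (auto simp: b)
  have "(\<integral>x. h x * indicator ?P x - b * indicator (space M - ?P) x \<partial>M) \<le> expectation h"
    using b by (intro integral_mono Bochner_Integration.integrable_diff int_hP int_Q int_h)
      (auto simp: indicator_def abs_le_iff minus_le_iff)
  moreover have "(\<integral>x. h x * indicator ?P x - b * indicator (space M - ?P) x \<partial>M)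
      = (\<integral>x. h x * indicator ?P x \<partial>M) - b * prob (space M - ?P)"
    using Bochner_Integration.integral_diff[OF int_hP int_Q] by simp
  moreover have "prob (space M - ?P) = 1 - prob ?P" by (rule prob_compl) simp
  ultimately show ?thesis using maximal_ergodic_inequality[OF h b, of n] by simp
qed

end

locale ergodic_prob_mpt = prob_mpt +
  assumes invariant_prob_trivial:
    "A \<in> sets M \<Longrightarrow> T -` A \<inter> space M = A \<Longrightarrow> prob A = 0 \<or> prob A = 1"
begin

text \<open>If the orbits with unbounded sums had full measure, the sets where the maximal sums are
  positive would exhaust the space, and the maximal inequality would force \<open>expectation h \<ge> 0\<close>.\<close>

lemma AE_bdd_above_birkhoff_sum:
  assumes h [measurable]: "h \<in> borel_measurable M" and b: "\<And>x. \<bar>h x\<bar> \<le> b"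
    and neg: "expectation h < 0"
  shows "AE x in M. bdd_above (range (\<lambda>n. birkhoff_sum T h n x))"
proof -
  define U where "U = {x \<in> space M. \<not> bdd_above (range (\<lambda>n. birkhoff_sum T h n x))}"
  have U_eq: "U = space M - {x \<in> space M. bdd_above (range (\<lambda>n. birkhoff_sum T h n x))}"
    unfolding U_def by blast
  have U_sets [measurable]: "U \<in> sets M" unfolding U_eq by measurable
  have "T -` U \<inter> space M = U"
    unfolding U_def using T_space bdd_above_birkhoff_sum_shift[of T h] by auto
  then have "prob U = 0 \<or> prob U = 1" by (rule invariant_prob_trivial[OF U_sets])
  moreover have "prob U \<noteq> 1"
  proof
    assume U1: "prob U = 1"
    define P where "P n = {x \<in> space M. 0 < birkhoff_max T h n x}" for n
    have "P n \<in> sets M" for n unfolding P_def by measurable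
    then have P_sets: "range P \<subseteq> sets M" by blast
    have "incseq P"
      unfolding incseq_def P_def using birkhoff_max_mono by (fastforce intro: less_le_trans)
    have "U \<subseteq> (\<Union>n. P n)"
    proof
      fix x assume "x \<in> U"
      then obtain n where "0 < birkhoff_sum T h n x" "x \<in> space M"
        unfolding U_def bdd_above_def by (force simp: not_le)
      then show "x \<in> (\<Union>n. P n)"
        unfolding P_def using birkhoff_sum_le_max[of n n T h x] by (auto intro: less_le_trans)
    qed
    then have "prob (\<Union>n. P n) = 1"
      using U1 finite_measure_mono[of U "\<Union>n. P n"] prob_le_1[of "\<Union>n. P n"] P_sets
      by (auto intro: antisym)
    then have "(\<lambda>n. prob (P n)) \<longlonglongrightarrow> 1"
      using finite_Lim_measure_incseq[OF P_sets \<open>incseq P\<close>] by simp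
    then have "(\<lambda>n. - b * (1 - prob (P n))) \<longlonglongrightarrow> - b * (1 - 1)"
      by (intro tendsto_intros)
    then have "0 \<le> expectation h"
      using expectation_ge_of_birkhoff_max[OF h b] unfolding P_def
      by (intro LIMSEQ_le_const2[of _ _ "expectation h"]) auto
    then show False using neg by simp
  qed
  ultimately have "U \<in> null_sets M" using U_sets by (simp add: null_setsI emeasure_eq_measure)
  then show ?thesis by (rule AE_I') (auto simp: U_def)
qed

lemma AE_visits_le:
  assumes [measurable]: "F \<in> sets M" and "prob F < c"
  shows "AE x in M. \<exists>B. \<forall>n. (\<Sum>i<n. indicator F ((T ^^ i) x)) \<le> c * real n + B"
proof -
  have "expectation (\<lambda>x. indicator F x - c) = prob F - c"
    by (subst Bochner_Integration.integral_diff) (auto simp: prob_space emeasure_eq_measure)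
  then have "AE x in M. bdd_above (range (\<lambda>n. birkhoff_sum T (\<lambda>x. indicator F x - c) n x))"
    using assms by (intro AE_bdd_above_birkhoff_sum[where b="1 + \<bar>c\<bar>"])
      (auto simp: indicator_def)
  then show ?thesis
    by eventually_elim (auto simp: bdd_above_def birkhoff_sum_def sum_subtractf algebra_simps)
qed

lemma AE_visits_ge:
  assumes [measurable]: "F \<in> sets M" and "c < prob F"
  shows "AE x in M. \<exists>B. \<forall>n. c * real n - B \<le> (\<Sum>i<n. indicator F ((T ^^ i) x))"
proof -
  have "expectation (\<lambda>x. c - indicator F x) = c - prob F"
    by (subst Bochner_Integration.integral_diff) (auto simp: prob_space emeasure_eq_measure)
  then have "AE x in M. bdd_above (range (\<lambda>n. birkhoff_sum T (\<lambda>x. c - indicator F x) n x))"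
    using assms by (intro AE_bdd_above_birkhoff_sum[where b="1 + \<bar>c\<bar>"])
      (auto simp: indicator_def)
  then show ?thesis
    by eventually_elim (auto simp: bdd_above_def birkhoff_sum_def sum_subtractf algebra_simps)
qed

lemma AE_bdd_above_birkhoff_sum_if_windows_nonpos:
  assumes [measurable]: "F \<in> sets M" and pos: "0 < prob F"
    and window: "\<And>x k n. x \<in> space M \<Longrightarrow> (T ^^ k) x \<in> F \<Longrightarrow> N < n \<Longrightarrow> n \<le> k \<Longrightarrow>
      (\<Sum>j\<in>{k - n..k + n}. f ((T ^^ j) x)) \<le> 0"
  shows "AE x in M. bdd_above (range (\<lambda>n. birkhoff_sum T f n x))"
proof -
  have "AE x in M. \<exists>B. \<forall>n. (\<Sum>i<n. indicator F ((T ^^ i) x)) \<le> 5/4 * prob F * real n + B"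
    using pos by (intro AE_visits_le) auto
  moreover have "AE x in M. \<exists>B. \<forall>n. 3/4 * prob F * real n - B \<le> (\<Sum>i<n. indicator F ((T ^^ i) x))"
    using pos by (intro AE_visits_ge) auto
  moreover note AE_space
  ultimately show ?thesis
  proof eventually_elim
    case (elim x)
    then obtain B1 B2 where
      B1: "\<And>n. (\<Sum>i<n. indicator F ((T ^^ i) x)) \<le> 5/4 * prob F * real n + B1" and
      B2: "\<And>n. 3/4 * prob F * real n - B2 \<le> (\<Sum>i<n. indicator F ((T ^^ i) x))"
      by blast
    have visits: "indicator {k. (T ^^ k) x \<in> F} k = indicator F ((T ^^ k) x)" for k
      by (simp add: indicator_def)
    show ?case unfolding birkhoff_sum_def
    proof (rule bdd_above_sums_if_windows_nonpos[where V="{k. (T ^^ k) x \<in> F}" and N=N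
          and \<alpha>="3/4 * prob F" and \<beta>="5/4 * prob F" and B="max B1 B2"])
      show "(\<Sum>k<n. indicator {k. (T ^^ k) x \<in> F} k) \<le> 5/4 * prob F * real n + max B1 B2" for n
        using B1[of n] unfolding visits by linarith
      show "3/4 * prob F * real n - max B1 B2 \<le> (\<Sum>k<n. indicator {k. (T ^^ k) x \<in> F} k)" for n
        using B2[of n] unfolding visits by linarith
    qed (use window elim pos in auto)
  qed
qed

end

lemma (in prob_space) ex_prob_pos_if_emeasure_UN_pos:
  fixes A :: "nat \<Rightarrow> 'a set"
  assumes "\<And>N. A N \<in> sets M" and "0 < emeasure M (\<Union>N. A N)"
  shows "\<exists>N. 0 < prob (A N)"
proof (rule ccontr)
  assume "\<nexists>N. 0 < prob (A N)"
  then have "emeasure M (A N) = 0" for N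
    using measure_nonneg[of M "A N"] by (simp add: emeasure_eq_measure not_less antisym)
  then have "emeasure M (\<Union>N. A N) = 0"
    using assms(1) by (intro emeasure_UN_eq_0) auto
  then show False using assms(2) by simp
qed

lemma SUP_ereal_less_infty_if_bdd_above:
  fixes s :: "'b \<Rightarrow> real"
  assumes "bdd_above (range s)"
  shows "(SUP n\<in>A. ereal (s n)) < \<infinity>"
proof -
  obtain B where "\<And>n. s n \<le> B" using assms by (auto simp: bdd_above_def)
  then have "(SUP n\<in>A. ereal (s n)) \<le> ereal B" by (intro SUP_least) auto
  then show ?thesis using order_le_less_trans[of _ "ereal B" \<infinity>] by auto
qed

lemma funpow_inv_map_funpow:
  assumes T: "bij_betw T (space M) (space M)" and x: "x \<in> space M" and "m \<le> k"
  shows "(inv_map M T ^^ m) ((T ^^ k) x) = (T ^^ (k - m)) x"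
  using \<open>m \<le> k\<close>
proof (induction m)
  case (Suc m)
  have space: "(T ^^ j) x \<in> space M" for j
    using x T by (induction j) (auto simp: bij_betw_def)
  have "(T ^^ (k - m)) x = T ((T ^^ (k - Suc m)) x)"
    using Suc.prems by (simp add: Suc_diff_Suc[symmetric])
  then show ?case
    using Suc T space unfolding inv_map_def bij_betw_def by (simp add: the_inv_into_f_f)
qed simp

lemma ipow_funpow:
  assumes T: "bij_betw T (space M) (space M)" and x: "x \<in> space M" and i: "- int k \<le> i"
  shows "ipow M T i ((T ^^ k) x) = (T ^^ nat (int k + i)) x"
proof (cases "0 \<le> i")
  case True
  then show ?thesis
    by (simp add: ipow_def nat_add_distrib add.commute funpow_add[symmetric, THEN fun_cong, simplified comp_def])
next
  case False
  then have "nat (- i) \<le> k" "k - nat (- i) = nat (int k + i)" using i by linarith+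
  then show ?thesis using False by (simp add: ipow_def funpow_inv_map_funpow[OF T x])
qed

lemma bilat_avg_funpow_nonpos_iff:
  assumes "bij_betw T (space M) (space M)" and "x \<in> space M" and "n \<le> k"
  shows "bilat_avg M T f n ((T ^^ k) x) \<le> 0 \<longleftrightarrow> (\<Sum>j\<in>{k - n..k + n}. f ((T ^^ j) x)) \<le> 0"
proof -
  have "(\<Sum>i\<in>{- int n..int n}. f (ipow M T i ((T ^^ k) x)))
      = (\<Sum>i\<in>{- int n..int n}. f ((T ^^ nat (int k + i)) x))"
    using assms by (intro sum.cong) (auto simp: ipow_funpow)
  also have "\<dots> = (\<Sum>j\<in>{k - n..k + n}. f ((T ^^ j) x))"
    by (rule sum_symmetric_window[OF \<open>n \<le> k\<close>])
  finally show ?thesis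
    unfolding bilat_avg_def by (simp add: divide_le_0_iff add_pos_nonneg)
qed

lemma bilat_avg_measurable [measurable]:
  assumes [measurable]: "T \<in> M \<rightarrow>\<^sub>M M" "inv_map M T \<in> M \<rightarrow>\<^sub>M M" "f \<in> borel_measurable M"
  shows "bilat_avg M T f n \<in> borel_measurable M"
proof -
  have [measurable]: "ipow M T i \<in> M \<rightarrow>\<^sub>M M" for i
    unfolding ipow_def using measurable_funpow by auto
  show ?thesis unfolding bilat_avg_def[abs_def] by measurable
qed

lemma ergodic_prob_mpt_if_ergodic_ipt: "ergodic_ipt M T \<Longrightarrow> ergodic_prob_mpt M T"
  unfolding ergodic_ipt_def by (intro ergodic_prob_mpt.intro prob_mpt.intro prob_mpt_axioms.intro
    ergodic_prob_mpt_axioms.intro) auto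

theorem lemma2:
  fixes M :: "'a measure" and T :: "'a \<Rightarrow> 'a" and f :: "'a \<Rightarrow> real"
  assumes "ergodic_ipt M T"
    and "f \<in> borel_measurable M"
    and "emeasure M (\<Union>N\<in>{0<..}. \<Inter>n\<in>{N<..}. {x \<in> space M. bilat_avg M T f n x \<le> 0}) > 0"
  shows "AE x in M. (SUP n\<in>{0<..}. ereal (\<Sum>i<n. f ((T ^^ i) x))) < \<infinity>"
proof -
  interpret ergodic_prob_mpt M T by (rule ergodic_prob_mpt_if_ergodic_ipt[OF assms(1)])
  have bij: "bij_betw T (space M) (space M)" and [measurable]: "inv_map M T \<in> M \<rightarrow>\<^sub>M M"
    using assms(1) unfolding ergodic_ipt_def by auto
  note [measurable] = assms(2)
  define F where "F N = {x \<in> space M. \<forall>n>N. bilat_avg M T f n x \<le> 0}" for N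
  have F_sets [measurable]: "F N \<in> sets M" for N unfolding F_def by measurable
  have "(\<Union>N\<in>{0<..}. \<Inter>n\<in>{N<..}. {x \<in> space M. bilat_avg M T f n x \<le> 0}) \<subseteq> (\<Union>N. F N)"
    unfolding F_def by fastforce
  then have "emeasure M (\<Union>N\<in>{0<..}. \<Inter>n\<in>{N<..}. {x \<in> space M. bilat_avg M T f n x \<le> 0})
      \<le> emeasure M (\<Union>N. F N)"
    by (rule emeasure_mono) auto
  then have "0 < emeasure M (\<Union>N. F N)" using assms(3) by order
  then obtain N where "0 < prob (F N)" using ex_prob_pos_if_emeasure_UN_pos[of F] F_sets by blast
  then have "AE x in M. bdd_above (range (\<lambda>n. birkhoff_sum T f n x))"
    by (rule AE_bdd_above_birkhoff_sum_if_windows_nonpos[OF F_sets])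
      (auto simp: F_def bilat_avg_funpow_nonpos_iff[OF bij])
  then show ?thesis
    by eventually_elim (rule SUP_ereal_less_infty_if_bdd_above, simp add: birkhoff_sum_def)
qed

end
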